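(* The space $X=\omega^*\times 2^\omega$ (with the product topology) is a compact $nwd$-separable space which is not $d$-separable.
   Context: $\omega^*=\beta\omega\setminus\omega$ is the Čech–Stone remainder of $\omega$, and $2^\omega$ is the Cantor space. A space is $d$-separable if it has a dense subset which is a countable union of discrete subspaces; it is $nwd$-separable if it has a dense subset which is a countable union of nowhere dense subsets. *)

theory Defs
  imports "HOL-Analysis.Analysis"
begin

definition is_ultrafilter_nat :: "nat set set \<Rightarrow> bool" where
  "is_ultrafilter_nat U \<longleftrightarrow>
     UNIV \<in> U \<and> {} \<notin> U \<and>
     (\<forall>A B. A \<in> U \<and> A \<subseteq> B \<longrightarrow> B \<in> U) \<and>
     (\<forall>A B. A \<in> U \<and> B \<in> U \<longrightarrow> A \<inter> B \<in> U) \<and>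
     (\<forall>A. A \<in> U \<or> - A \<in> U)"

text \<open>beta omega: the Stone space of ultrafilters on nat, with basic open sets
  {U. A \<in> U}; omega is embedded via principal ultrafilters.\<close>
definition beta_omega :: "nat set set topology" where
  "beta_omega = topology_generated_by
     {{U. is_ultrafilter_nat U \<and> A \<in> U} | A. True}"

text \<open>omega* = beta omega minus omega, i.e. the free (non-principal) ultrafilters.\<close>
definition omega_star :: "nat set set topology" where
  "omega_star = subtopology beta_omega
     {U. is_ultrafilter_nat U \<and> (\<forall>n. {n} \<notin> U)}"

definition cantor_space :: "(nat \<Rightarrow> bool) topology" where
  "cantor_space = product_topology (\<lambda>_. discrete_topology (UNIV :: bool set)) UNIV"

definition nowhere_dense_in :: "'a topology \<Rightarrow> 'a set \<Rightarrow> bool" where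
  "nowhere_dense_in X A \<longleftrightarrow> A \<subseteq> topspace X \<and> X interior_of (X closure_of A) = {}"

definition discrete_subspace :: "'a topology \<Rightarrow> 'a set \<Rightarrow> bool" where
  "discrete_subspace X A \<longleftrightarrow> A \<subseteq> topspace X \<and> subtopology X A = discrete_topology A"

definition d_separable :: "'a topology \<Rightarrow> bool" where
  "d_separable X \<longleftrightarrow> (\<exists>D :: nat \<Rightarrow> 'a set.
      (\<forall>n. discrete_subspace X (D n)) \<and> X closure_of (\<Union>n. D n) = topspace X)"

definition nwd_separable :: "'a topology \<Rightarrow> bool" where
  "nwd_separable X \<longleftrightarrow> (\<exists>D :: nat \<Rightarrow> 'a set.
      (\<forall>n. nowhere_dense_in X (D n)) \<and> X closure_of (\<Union>n. D n) = topspace X)"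

end

theory Submission
  imports Defs
begin

text \<open>
  Compactness of \<open>\<omega>* \<times> 2\<^sup>\<omega>\<close> is Tychonoff, and nwd-separability holds because the slices
  \<open>\<omega>* \<times> {q}\<close>, for \<open>q\<close> in a countable dense subset of \<open>2\<^sup>\<omega>\<close>, are nowhere dense
  (\<open>2\<^sup>\<omega>\<close> has no isolated points) with dense union.

  For the failure of d-separability, let \<open>D\<^sub>n\<close> be discrete. Every point of \<open>D\<^sub>n\<close> is
  isolated in \<open>D\<^sub>n\<close> by a box \<open>C* \<times> V\<close> with \<open>V\<close> from a countable base of \<open>2\<^sup>\<omega>\<close>,
  and for fixed \<open>n\<close> and \<open>V\<close> the first coordinates of the points so isolated form a
  nowhere dense subset of \<open>\<omega>*\<close>: if \<open>C* \<times> V\<close> isolates a point over \<open>u\<close>, then \<open>u\<close> is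
  the only such first coordinate in \<open>C*\<close>, and it is avoided by shrinking \<open>C\<close> to an
  infinite set outside \<open>u\<close>.
  Countably many nowhere dense subsets of \<open>\<omega>*\<close> are missed by a single nonempty basic
  set \<open>B*\<close>, since decreasing sequences of infinite sets have infinite pseudo-intersections.
  Then the open set \<open>B* \<times> 2\<^sup>\<omega>\<close> misses every \<open>D\<^sub>n\<close>.
\<close>

section \<open>Free ultrafilters on the natural numbers\<close>

definition free_ultrafilters :: "nat set set set" where
  "free_ultrafilters = {U. is_ultrafilter_nat U \<and> (\<forall>n. {n} \<notin> U)}"

definition star_set :: "nat set \<Rightarrow> nat set set set" where
  "star_set A = {U \<in> free_ultrafilters. A \<in> U}"

definition infinite_fip :: "nat set set \<Rightarrow> bool" where
  "infinite_fip G \<longleftrightarrow> (\<forall>F. finite F \<and> F \<subseteq> G \<longrightarrow> infinite (\<Inter>F))"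

lemma ultrafilter_superset: "is_ultrafilter_nat U \<Longrightarrow> A \<in> U \<Longrightarrow> A \<subseteq> B \<Longrightarrow> B \<in> U"
  unfolding is_ultrafilter_nat_def by blast

lemma ultrafilter_Int_iff:
  assumes "is_ultrafilter_nat U"
  shows "A \<inter> B \<in> U \<longleftrightarrow> A \<in> U \<and> B \<in> U"
  using assms ultrafilter_superset[OF assms, of "A \<inter> B"] unfolding is_ultrafilter_nat_def by blast

lemma ultrafilter_Compl_iff:
  assumes "is_ultrafilter_nat U"
  shows "- A \<in> U \<longleftrightarrow> A \<notin> U"
proof -
  have "A \<inter> - A \<notin> U"
    using assms unfolding is_ultrafilter_nat_def by simp
  then show ?thesis
    using assms ultrafilter_Int_iff[OF assms] unfolding is_ultrafilter_nat_def by blast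
qed

lemma ultrafilter_Inter:
  assumes "is_ultrafilter_nat U" "finite F" "F \<subseteq> U"
  shows "\<Inter>F \<in> U"
  using assms(2,3)
proof induction
  case empty
  then show ?case
    using assms(1) unfolding is_ultrafilter_nat_def by simp
next
  case (insert A F)
  then show ?case
    using ultrafilter_Int_iff[OF assms(1)] by simp
qed

lemma free_ultrafilter_cofinite:
  assumes "U \<in> free_ultrafilters" "finite F"
  shows "- F \<in> U"
proof -
  have U: "is_ultrafilter_nat U" "\<And>n. {n} \<notin> U"
    using assms(1) unfolding free_ultrafilters_def by auto
  have "\<Inter>((\<lambda>n. - {n}) ` F) \<in> U"
    using U ultrafilter_Compl_iff by (intro ultrafilter_Inter) (auto simp: assms(2))
  moreover have "\<Inter>((\<lambda>n. - {n}) ` F) = - F"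
    by blast
  ultimately show ?thesis
    by simp
qed

lemma free_ultrafilter_infinite:
  assumes "U \<in> free_ultrafilters" "A \<in> U"
  shows "infinite A"
proof
  assume "finite A"
  then have "- A \<in> U"
    by (rule free_ultrafilter_cofinite[OF assms(1)])
  then show False
    using assms ultrafilter_Compl_iff unfolding free_ultrafilters_def by blast
qed

lemma star_set_mono: "A \<subseteq> B \<Longrightarrow> star_set A \<subseteq> star_set B"
  unfolding star_set_def free_ultrafilters_def using ultrafilter_superset by blast

lemma star_set_almost_mono:
  assumes "finite (B - A)"
  shows "star_set B \<subseteq> star_set A"
proof
  fix U assume U: "U \<in> star_set B"
  then have "B \<inter> - (B - A) \<in> U"
    using free_ultrafilter_cofinite[OF _ assms] ultrafilter_Int_iff
    unfolding star_set_def free_ultrafilters_def by simp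
  then show "U \<in> star_set A"
    using U ultrafilter_superset unfolding star_set_def free_ultrafilters_def by blast
qed

lemma infinite_fip_insert:
  "infinite_fip (insert B M) \<longleftrightarrow>
     infinite_fip M \<and> (\<forall>F. finite F \<and> F \<subseteq> M \<longrightarrow> infinite (B \<inter> \<Inter>F))"
proof (intro iffI conjI allI impI; (elim conjE)?)
  assume H: "infinite_fip (insert B M)"
  show "infinite_fip M"
    using H unfolding infinite_fip_def by (meson subset_insertI2)
  fix F assume "finite F" "F \<subseteq> M"
  then show "infinite (B \<inter> \<Inter>F)"
    using H[unfolded infinite_fip_def, rule_format, of "insert B F"] by auto
next
  assume M: "infinite_fip M" and B: "\<forall>F. finite F \<and> F \<subseteq> M \<longrightarrow> infinite (B \<inter> \<Inter>F)"
  show "infinite_fip (insert B M)"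
    unfolding infinite_fip_def
  proof (intro allI impI notI; elim conjE)
    fix F assume F: "finite F" "F \<subseteq> insert B M" "finite (\<Inter>F)"
    show False
    proof (cases "B \<in> F")
      case True
      then have "\<Inter>F = B \<inter> \<Inter>(F - {B})"
        by blast
      moreover have "infinite (B \<inter> \<Inter>(F - {B}))"
        using B F(1,2) by auto
      ultimately show False
        using F(3) by simp
    next
      case False
      then have "F \<subseteq> M"
        using F(2) by blast
      then show False
        using M F(1,3) unfolding infinite_fip_def by blast
    qed
  qed
qed

lemma maximal_infinite_fip_free_ultrafilter:
  assumes M: "infinite_fip M" and maximal: "\<And>B. infinite_fip (insert B M) \<Longrightarrow> B \<in> M"
  shows "M \<in> free_ultrafilters"
proof -
  have mem: "B \<in> M \<longleftrightarrow> (\<forall>F. finite F \<and> F \<subseteq> M \<longrightarrow> infinite (B \<inter> \<Inter>F))" for B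
    using maximal M infinite_fip_insert[of B M] insert_absorb[of B M] by metis
  have upward: "B \<in> M" if "A \<in> M" "A \<subseteq> B" for A B
  proof -
    have "A \<inter> \<Inter>F \<subseteq> B \<inter> \<Inter>F" for F
      using \<open>A \<subseteq> B\<close> by blast
    then show ?thesis
      using \<open>A \<in> M\<close> unfolding mem by (meson finite_subset)
  qed
  have Int: "A \<inter> B \<in> M" if "A \<in> M" "B \<in> M" for A B
    unfolding mem[of "A \<inter> B"]
  proof (intro allI impI; elim conjE)
    fix F assume "finite F" "F \<subseteq> M"
    then have "infinite (A \<inter> \<Inter>(insert B F))"
      using that mem[of A] by (meson finite_insert insert_subset)
    then show "infinite (A \<inter> B \<inter> \<Inter>F)"
      by (simp add: Int_assoc)
  qed
  have Compl: "A \<in> M \<or> - A \<in> M" for A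
  proof (rule ccontr)
    assume "\<not> (A \<in> M \<or> - A \<in> M)"
    then obtain F1 F2 where F: "finite F1" "F1 \<subseteq> M" "finite (A \<inter> \<Inter>F1)"
      "finite F2" "F2 \<subseteq> M" "finite (- A \<inter> \<Inter>F2)"
      unfolding mem by blast
    have "\<Inter>(F1 \<union> F2) \<subseteq> (A \<inter> \<Inter>F1) \<union> (- A \<inter> \<Inter>F2)"
      by auto
    then have "finite (\<Inter>(F1 \<union> F2))"
      using F(3,6) by (meson finite_UnI finite_subset)
    then show False
      using M F unfolding infinite_fip_def by (meson finite_UnI le_sup_iff)
  qed
  have "{} \<notin> M" "{n} \<notin> M" for n
    using M[unfolded infinite_fip_def, rule_format, of "{{}}"]
      M[unfolded infinite_fip_def, rule_format, of "{{n}}"] by auto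
  moreover have "is_ultrafilter_nat M"
    unfolding is_ultrafilter_nat_def
  proof (intro conjI allI impI)
    show "B \<in> M" if "A \<in> M \<and> A \<subseteq> B" for A B
      using that upward by blast
    show "A \<inter> B \<in> M" if "A \<in> M \<and> B \<in> M" for A B
      using that Int by blast
    show "UNIV \<in> M"
      using Compl[of UNIV] upward by blast
  qed (use \<open>{} \<notin> M\<close> Compl in auto)
  ultimately show ?thesis
    unfolding free_ultrafilters_def by blast
qed

lemma free_ultrafilter_extends:
  assumes "infinite_fip G"
  shows "\<exists>U \<in> free_ultrafilters. G \<subseteq> U"
proof -
  define \<A> where "\<A> = {H. G \<subseteq> H \<and> infinite_fip H}"
  have "\<exists>U\<in>\<A>. \<forall>X\<in>C. X \<subseteq> U" if C: "C \<in> chains \<A>" for C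
  proof (cases "C = {}")
    case True
    then show ?thesis
      using assms by (auto simp: \<A>_def)
  next
    case False
    have "infinite_fip (\<Union>C)"
      unfolding infinite_fip_def
    proof safe
      fix F assume F: "finite F" "F \<subseteq> \<Union>C" "finite (\<Inter>F)"
      have "subset.chain \<A> C"
        using C unfolding chains_alt_def by simp
      then obtain H where "H \<in> C" "F \<subseteq> H"
        using finite_subset_Union_chain[OF F(1,2) False] by blast
      moreover have "infinite_fip H"
        using chainsD2[OF C] \<open>H \<in> C\<close> unfolding \<A>_def by blast
      ultimately show False
        using F unfolding infinite_fip_def by blast
    qed
    moreover have "G \<subseteq> \<Union>C"
      using chainsD2[OF C] False unfolding \<A>_def by blast
    ultimately show ?thesis
      unfolding \<A>_def by blast
  qed
  then obtain M where M: "M \<in> \<A>" and maximal: "\<forall>X\<in>\<A>. M \<subseteq> X \<longrightarrow> X = M"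
    using Zorn_Lemma2[of \<A>] by blast
  have "B \<in> M" if "infinite_fip (insert B M)" for B
    using maximal[rule_format, of "insert B M"] M that unfolding \<A>_def by blast
  then have "M \<in> free_ultrafilters"
    using M maximal_infinite_fip_free_ultrafilter unfolding \<A>_def by blast
  then show ?thesis
    using \<open>M \<in> \<A>\<close> \<A>_def by blast
qed

section \<open>The remainder \<open>\<omega>*\<close>\<close>

lemma topspace_beta_omega: "topspace beta_omega = {U. is_ultrafilter_nat U}"
proof -
  have "U \<in> {V. is_ultrafilter_nat V \<and> UNIV \<in> V}" if "is_ultrafilter_nat U" for U
    using that unfolding is_ultrafilter_nat_def by simp
  then show ?thesis
    unfolding beta_omega_def topology_generated_by_topspace by blast
qed

lemma topspace_omega_star: "topspace omega_star = free_ultrafilters"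
  unfolding omega_star_def topspace_subtopology topspace_beta_omega free_ultrafilters_def by blast

lemma beta_omega_base:
  assumes "openin beta_omega T" "U \<in> T"
  shows "\<exists>A\<in>U. {V. is_ultrafilter_nat V \<and> A \<in> V} \<subseteq> T"
proof -
  define basic where "basic A = {V. is_ultrafilter_nat V \<and> A \<in> V}" for A
  have "generate_topology_on (range basic) T"
    using assms(1) unfolding beta_omega_def openin_topology_generated_by_iff basic_def
    by (simp add: full_SetCompr_eq)
  then have "\<forall>U\<in>T. is_ultrafilter_nat U \<and> (\<exists>A\<in>U. basic A \<subseteq> T)"
  proof induction
    case Empty
    then show ?case
      by simp
  next
    case (Int S T)
    show ?case
    proof
      fix U assume "U \<in> S \<inter> T"
      then obtain A B where U: "is_ultrafilter_nat U" "A \<in> U" "B \<in> U"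
        and "basic A \<subseteq> S" "basic B \<subseteq> T"
        using Int.IH by (meson IntD1 IntD2)
      then have "basic (A \<inter> B) \<subseteq> S \<inter> T"
        unfolding basic_def by (auto simp: ultrafilter_Int_iff)
      then show "is_ultrafilter_nat U \<and> (\<exists>C\<in>U. basic C \<subseteq> S \<inter> T)"
        using U by (intro conjI bexI[of _ "A \<inter> B"]) (simp_all add: ultrafilter_Int_iff)
    qed
  next
    case (UN \<K>)
    then show ?case
      by (meson Union_upper subset_trans UnionE)
  next
    case (Basis S)
    then show ?case
      unfolding basic_def by blast
  qed
  then show ?thesis
    using assms(2) unfolding basic_def by blast
qed

lemma openin_star_set: "openin omega_star (star_set A)"
proof -
  have "openin beta_omega {V. is_ultrafilter_nat V \<and> A \<in> V}"
    unfolding beta_omega_def openin_topology_generated_by_iff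
    by (rule generate_topology_on.Basis) blast
  moreover have "star_set A = {V. is_ultrafilter_nat V \<and> A \<in> V} \<inter> free_ultrafilters"
    unfolding star_set_def free_ultrafilters_def by blast
  ultimately show ?thesis
    unfolding omega_star_def openin_subtopology free_ultrafilters_def by blast
qed

lemma omega_star_base:
  assumes "openin omega_star S" "U \<in> S"
  shows "\<exists>A\<in>U. star_set A \<subseteq> S"
proof -
  obtain T where "openin beta_omega T" "S = T \<inter> free_ultrafilters"
    using assms(1) unfolding omega_star_def openin_subtopology free_ultrafilters_def by blast
  moreover obtain A where "A \<in> U" "{V. is_ultrafilter_nat V \<and> A \<in> V} \<subseteq> T"
    using beta_omega_base calculation assms(2) by blast
  ultimately show ?thesis
    unfolding star_set_def free_ultrafilters_def by blast
qed

lemma star_set_nonempty: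
  assumes "infinite A"
  shows "star_set A \<noteq> {}"
proof -
  have "infinite_fip {A}"
    unfolding infinite_fip_def
  proof (intro allI impI; elim conjE)
    fix F assume "F \<subseteq> {A}"
    then consider "F = {}" | "F = {A}"
      by blast
    then show "infinite (\<Inter>F)"
      by cases (simp_all add: assms)
  qed
  then show ?thesis
    using free_ultrafilter_extends unfolding star_set_def by blast
qed

lemma free_ultrafilters_finite_subcover:
  assumes "\<forall>U\<in>free_ultrafilters. \<exists>A\<in>\<A>. A \<in> U"
  shows "\<exists>\<F>\<subseteq>\<A>. finite \<F> \<and> (\<forall>U\<in>free_ultrafilters. \<exists>A\<in>\<F>. A \<in> U)"
proof -
  have "\<not> infinite_fip (uminus ` \<A>)"
  proof
    assume "infinite_fip (uminus ` \<A>)"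
    then obtain U where U: "U \<in> free_ultrafilters" "uminus ` \<A> \<subseteq> U"
      using free_ultrafilter_extends by blast
    then obtain A where "A \<in> \<A>" "A \<in> U"
      using assms by blast
    moreover have "is_ultrafilter_nat U"
      using U(1) unfolding free_ultrafilters_def by simp
    ultimately show False
      using U(2) ultrafilter_Compl_iff[of U A] by blast
  qed
  then obtain F where F: "finite F" "F \<subseteq> uminus ` \<A>" "finite (\<Inter>F)"
    unfolding infinite_fip_def by blast
  then obtain \<F> where \<F>: "\<F> \<subseteq> \<A>" "finite \<F>" "F = uminus ` \<F>"
    using finite_subset_image[OF F(1,2)] by blast
  have "\<exists>A\<in>\<F>. A \<in> U" if U: "U \<in> free_ultrafilters" for U
  proof (rule ccontr)
    assume "\<not> (\<exists>A\<in>\<F>. A \<in> U)"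
    moreover have "is_ultrafilter_nat U"
      using U unfolding free_ultrafilters_def by simp
    ultimately have "F \<subseteq> U"
      unfolding \<F>(3) using ultrafilter_Compl_iff by blast
    then have "\<Inter>F \<in> U"
      using \<open>is_ultrafilter_nat U\<close> F(1) ultrafilter_Inter by blast
    then show False
      using free_ultrafilter_infinite[OF U] F(3) by blast
  qed
  then show ?thesis
    using \<F>(1,2) by blast
qed

lemma compact_space_omega_star: "compact_space omega_star"
  unfolding compact_space_alt topspace_omega_star
proof (intro allI impI; elim conjE)
  fix \<U> assume open_cover: "\<forall>W\<in>\<U>. openin omega_star W" "free_ultrafilters \<subseteq> \<Union>\<U>"
  define \<A> where "\<A> = {A. \<exists>W\<in>\<U>. star_set A \<subseteq> W}"
  have "\<exists>A\<in>\<A>. A \<in> U" if U: "U \<in> free_ultrafilters" for U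
  proof -
    obtain W where "W \<in> \<U>" "U \<in> W"
      using open_cover(2) U by blast
    then obtain A where "A \<in> U" "star_set A \<subseteq> W"
      using open_cover(1) omega_star_base by meson
    then show ?thesis
      unfolding \<A>_def using \<open>W \<in> \<U>\<close> by blast
  qed
  then obtain \<F> where \<F>: "\<F> \<subseteq> \<A>" "finite \<F>" "\<forall>U\<in>free_ultrafilters. \<exists>A\<in>\<F>. A \<in> U"
    using free_ultrafilters_finite_subcover by meson
  obtain w where w: "\<forall>A\<in>\<A>. w A \<in> \<U> \<and> star_set A \<subseteq> w A"
    using bchoice[of \<A> "\<lambda>A W. W \<in> \<U> \<and> star_set A \<subseteq> W"] unfolding \<A>_def by blast
  have "free_ultrafilters \<subseteq> \<Union>(w ` \<F>)"
  proof
    fix U assume "U \<in> free_ultrafilters"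
    then obtain A where "A \<in> \<F>" "U \<in> star_set A"
      using \<F>(3) unfolding star_set_def by blast
    then show "U \<in> \<Union>(w ` \<F>)"
      using \<F>(1) w by blast
  qed
  moreover have "w ` \<F> \<subseteq> \<U>"
    using \<F>(1) w by blast
  ultimately show "\<exists>\<V>. finite \<V> \<and> \<V> \<subseteq> \<U> \<and> free_ultrafilters \<subseteq> \<Union>\<V>"
    using \<F>(2) by blast
qed

lemma decseq_pseudo_intersection:
  fixes A :: "nat \<Rightarrow> nat set"
  assumes "decseq A" "\<And>k. infinite (A k)"
  shows "\<exists>B. infinite B \<and> (\<forall>k. finite (B - A k))"
proof -
  have "\<forall>k. \<exists>x. x \<in> A k \<and> k < x"
    using assms(2) unfolding infinite_nat_iff_unbounded by blast
  then obtain a where a: "\<And>k. a k \<in> A k \<and> k < a k"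
    by metis
  have "range a - A k \<subseteq> a ` {..<k}" for k
  proof
    fix x assume "x \<in> range a - A k"
    then obtain j where "x = a j" "a j \<notin> A k"
      by blast
    moreover have "j < k"
      using \<open>a j \<notin> A k\<close> a[of j] assms(1) unfolding decseq_def by (meson not_le subsetD)
    ultimately show "x \<in> a ` {..<k}"
      by blast
  qed
  then have "finite (range a - A k)" for k
    by (meson finite_lessThan finite_imageI finite_subset)
  moreover have "infinite (range a)"
    unfolding infinite_nat_iff_unbounded using a by blast
  ultimately show ?thesis
    by blast
qed

definition nowhere_dense_star :: "nat set set set \<Rightarrow> bool" where
  "nowhere_dense_star P \<longleftrightarrow> (\<forall>A. infinite A \<longrightarrow> (\<exists>B\<subseteq>A. infinite B \<and> star_set B \<inter> P = {}))"

text \<open>A strong Baire property of \<open>\<omega>*\<close>, not shared by \<open>2\<^sup>\<omega>\<close>; it is what rules out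
  d-separability.\<close>
lemma nowhere_dense_star_sequence_avoided:
  fixes P :: "nat \<Rightarrow> nat set set set"
  assumes "\<And>k. nowhere_dense_star (P k)"
  shows "\<exists>B. infinite B \<and> (\<forall>k. star_set B \<inter> P k = {})"
proof -
  define shrink where "shrink k X = (SOME B. B \<subseteq> X \<and> infinite B \<and> star_set B \<inter> P k = {})" for k X
  have shrink: "shrink k X \<subseteq> X \<and> infinite (shrink k X) \<and> star_set (shrink k X) \<inter> P k = {}"
    if "infinite X" for k X
    unfolding shrink_def by (rule someI_ex) (use assms[of k] that in \<open>unfold nowhere_dense_star_def, blast\<close>)
  define A where "A = rec_nat UNIV shrink"
  have A_Suc: "A (Suc k) = shrink k (A k)" for k
    unfolding A_def by simp
  have infinite_A: "infinite (A k)" for k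
    by (induction k) (auto simp: A_def shrink)
  have "decseq A"
    using shrink infinite_A by (intro decseq_SucI) (simp add: A_Suc)
  then obtain B where B: "infinite B" "\<And>k. finite (B - A k)"
    using decseq_pseudo_intersection infinite_A by blast
  have "star_set B \<inter> P k = {}" for k
    using star_set_almost_mono[OF B(2)[of "Suc k"]] shrink[OF infinite_A[of k]] by (auto simp: A_Suc)
  then show ?thesis
    using B(1) by blast
qed

lemma nowhere_dense_star_countable_avoided:
  assumes "countable K" "\<And>k. k \<in> K \<Longrightarrow> nowhere_dense_star (P k)"
  shows "\<exists>B. infinite B \<and> (\<forall>k\<in>K. star_set B \<inter> P k = {})"
proof (cases "K = {}")
  case False
  obtain B where B: "infinite B" "\<And>n. star_set B \<inter> P (from_nat_into K n) = {}"
    using nowhere_dense_star_sequence_avoided[of "\<lambda>n. P (from_nat_into K n)"]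
      assms(2) from_nat_into[OF False] by blast
  have "star_set B \<inter> P k = {}" if "k \<in> K" for k
    using B(2)[of "to_nat_on K k"] from_nat_into_to_nat_on[OF assms(1) that] by simp
  then show ?thesis
    using B(1) by blast
qed auto

lemma infinite_subset_not_in_ultrafilter:
  assumes "infinite S" "is_ultrafilter_nat U"
  shows "\<exists>B\<subseteq>S. infinite B \<and> B \<notin> U"
proof -
  define e where "e = enumerate S"
  have "inj e"
    unfolding e_def using assms(1) by (rule inj_enumerate)
  define E where "E b = range (\<lambda>m. e (2 * m + of_bool b))" for b
  have infinite_E: "infinite (E b)" for b
  proof -
    have "inj (\<lambda>m. e (2 * m + of_bool b))"
      using \<open>inj e\<close> by (intro injI) (simp add: inj_eq)
    then show ?thesis
      unfolding E_def by (rule range_inj_infinite)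
  qed
  have E_subset: "E b \<subseteq> S" for b
    unfolding E_def e_def using enumerate_in_set[OF assms(1)] by blast
  have "2 * m + 1 \<noteq> 2 * k" for m k :: nat
    by presburger
  then have "E True \<inter> E False = {}"
    unfolding E_def by (auto simp: inj_eq[OF \<open>inj e\<close>])
  moreover have "{} \<notin> U"
    using assms(2) unfolding is_ultrafilter_nat_def by simp
  ultimately have "E True \<notin> U \<or> E False \<notin> U"
    using ultrafilter_Int_iff[OF assms(2), of "E True" "E False"] by auto
  then obtain b where "E b \<notin> U"
    by blast
  then show ?thesis
    using infinite_E E_subset by blast
qed

section \<open>Cantor space\<close>

definition cylinder :: "bool list \<Rightarrow> (nat \<Rightarrow> bool) set" where
  "cylinder l = {c. \<forall>i<length l. c i = l ! i}"

lemma topspace_cantor_space [simp]: "topspace cantor_space = UNIV"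
  unfolding cantor_space_def by simp

lemma openin_cantor_cylinder: "openin cantor_space (cylinder l)"
proof -
  have "openin cantor_space {c \<in> topspace cantor_space. c i \<in> {b}}" for i b
    unfolding cantor_space_def
    by (intro openin_continuous_map_preimage[OF continuous_map_product_projection]) auto
  then have "openin cantor_space ((\<Inter>i\<in>{..<length l}. {c. c i = l ! i}) \<inter> topspace cantor_space)"
    by (intro openin_INT) auto
  moreover have "(\<Inter>i\<in>{..<length l}. {c. c i = l ! i}) \<inter> topspace cantor_space = cylinder l"
    unfolding cylinder_def by auto
  ultimately show ?thesis
    by simp
qed

lemma cantor_cylinder_base:
  assumes "openin cantor_space W" "c \<in> W"
  shows "\<exists>l. c \<in> cylinder l \<and> cylinder l \<subseteq> W"
proof -
  obtain U where U: "finite {i. U i \<noteq> topspace (discrete_topology (UNIV :: bool set))}"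
    "c \<in> Pi\<^sub>E UNIV U" "Pi\<^sub>E UNIV U \<subseteq> W"
    using assms unfolding cantor_space_def openin_product_topology_alt by auto
  then obtain N where "\<forall>i\<in>{i. U i \<noteq> UNIV}. i < N"
    by (auto simp: finite_nat_set_iff_bounded)
  then have N: "\<And>i. N \<le> i \<Longrightarrow> U i = UNIV"
    by (meson mem_Collect_eq not_less)
  define l where "l = map c [0..<N]"
  have "cylinder l \<subseteq> Pi\<^sub>E UNIV U"
  proof
    fix d assume "d \<in> cylinder l"
    then have "d i = c i" if "i < N" for i
      using that unfolding cylinder_def l_def by auto
    then have "d i \<in> U i" for i
      using U(2) N[of i] by (cases "i < N") (auto simp: PiE_iff)
    then show "d \<in> Pi\<^sub>E UNIV U"
      by (simp add: PiE_iff)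
  qed
  moreover have "c \<in> cylinder l"
    unfolding cylinder_def l_def by simp
  ultimately show ?thesis
    using U(3) by blast
qed

lemma second_countable_cantor_space: "second_countable cantor_space"
  unfolding second_countable_def
  using openin_cantor_cylinder cantor_cylinder_base
  by (intro exI[of _ "range cylinder"]) auto

lemma compact_space_cantor_space: "compact_space cantor_space"
  unfolding cantor_space_def compact_space_product_topology
  by (simp add: compact_space_discrete_topology)

lemma nowhere_dense_cantor_singleton: "nowhere_dense_in cantor_space {c}"
proof -
  have "Hausdorff_space cantor_space"
    unfolding cantor_space_def by (simp add: Hausdorff_space_product_topology)
  then have "cantor_space closure_of {c} = {c}"
    by (simp add: closedin_Hausdorff_singleton closure_of_eq)
  moreover have "W = {}" if W: "openin cantor_space W" "W \<subseteq> {c}" for W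
  proof (rule ccontr)
    assume "W \<noteq> {}"
    then have "c \<in> W"
      using W(2) by blast
    then obtain l where l: "c \<in> cylinder l" "cylinder l \<subseteq> {c}"
      using cantor_cylinder_base[OF W(1)] W(2) by blast
    then have "c(length l := \<not> c (length l)) \<in> cylinder l"
      unfolding cylinder_def by simp
    then have "c(length l := \<not> c (length l)) = c"
      using l(2) by blast
    then have "(c(length l := \<not> c (length l))) (length l) = c (length l)"
      by (rule fun_cong)
    then show False
      by simp
  qed
  ultimately show ?thesis
    unfolding nowhere_dense_in_def interior_of_eq_empty by simp
qed

section \<open>Products\<close>

lemma nowhere_dense_in_Times:
  assumes "S \<subseteq> topspace X" "nowhere_dense_in Y T"
  shows "nowhere_dense_in (prod_topology X Y) (S \<times> T)"
  using assms unfolding nowhere_dense_in_def closure_of_Times interior_of_Times by auto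

lemma nwd_separable_prod_topology:
  assumes "separable_space Y" "\<And>y. y \<in> topspace Y \<Longrightarrow> nowhere_dense_in Y {y}"
  shows "nwd_separable (prod_topology X Y)"
proof -
  obtain C where C: "countable C" "C \<subseteq> topspace Y" "Y closure_of C = topspace Y"
    using assms(1) unfolding separable_space_def by blast
  show ?thesis
  proof (cases "C = {}")
    case True
    then have "topspace Y = {}"
      using C(3) by simp
    then show ?thesis
      unfolding nwd_separable_def nowhere_dense_in_def topspace_prod_topology
      by (intro exI[of _ "\<lambda>_. {}"]) simp
  next
    case False
    define D where "D n = topspace X \<times> {from_nat_into C n}" for n
    have "nowhere_dense_in (prod_topology X Y) (D n)" for n
      unfolding D_def using C(2) assms(2) from_nat_into[OF False]
      by (intro nowhere_dense_in_Times) auto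
    moreover have "(\<Union>n. D n) = topspace X \<times> C"
      using range_from_nat_into[OF False C(1)] unfolding D_def by auto
    then have "prod_topology X Y closure_of (\<Union>n. D n) = topspace (prod_topology X Y)"
      using C(3) by (simp add: closure_of_Times)
    ultimately show ?thesis
      unfolding nwd_separable_def by blast
  qed
qed

lemma prod_omega_star_base:
  assumes base: "\<And>W y. openin Y W \<Longrightarrow> y \<in> W \<Longrightarrow> \<exists>V\<in>\<B>. y \<in> V \<and> V \<subseteq> W"
    and "openin (prod_topology omega_star Y) T" "(u, y) \<in> T"
  shows "\<exists>A V. A \<in> u \<and> V \<in> \<B> \<and> y \<in> V \<and> star_set A \<times> V \<subseteq> T"
proof -
  obtain S W where SW: "openin omega_star S" "openin Y W" "u \<in> S" "y \<in> W" "S \<times> W \<subseteq> T"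
    using assms(2,3) unfolding openin_prod_topology_alt by meson
  obtain A where "A \<in> u" "star_set A \<subseteq> S"
    using omega_star_base[OF SW(1,3)] by blast
  moreover obtain V where "V \<in> \<B>" "y \<in> V" "V \<subseteq> W"
    using base[OF SW(2,4)] by blast
  ultimately show ?thesis
    using SW(5) by blast
qed

definition isolated_by :: "(nat set set \<times> 'b) set \<Rightarrow> 'b set \<Rightarrow> nat set set set" where
  "isolated_by D V =
     {u. \<exists>c C. (u, c) \<in> D \<and> c \<in> V \<and> C \<in> u \<and> D \<inter> (star_set C \<times> V) \<subseteq> {(u, c)}}"

lemma nowhere_dense_star_isolated_by: "nowhere_dense_star (isolated_by D V)"
  unfolding nowhere_dense_star_def
proof (intro allI impI)
  fix A :: "nat set" assume "infinite A"
  show "\<exists>B\<subseteq>A. infinite B \<and> star_set B \<inter> isolated_by D V = {}"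
  proof (cases "star_set A \<inter> isolated_by D V = {}")
    case False
    then obtain u c C where u: "u \<in> star_set A" "(u, c) \<in> D" "c \<in> V" "C \<in> u"
      and isolated: "D \<inter> (star_set C \<times> V) \<subseteq> {(u, c)}"
      unfolding isolated_by_def by blast
    have "u \<in> free_ultrafilters" "is_ultrafilter_nat u" "A \<in> u"
      using u(1) unfolding star_set_def free_ultrafilters_def by auto
    then have "A \<inter> C \<in> u"
      using u(4) ultrafilter_Int_iff by simp
    then have "infinite (A \<inter> C)"
      by (rule free_ultrafilter_infinite[OF \<open>u \<in> free_ultrafilters\<close>])
    then obtain B where B: "B \<subseteq> A \<inter> C" "infinite B" "B \<notin> u"
      using infinite_subset_not_in_ultrafilter \<open>is_ultrafilter_nat u\<close> by blast
    have "u' \<notin> isolated_by D V" if "u' \<in> star_set B" for u'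
    proof
      assume "u' \<in> isolated_by D V"
      then obtain c' where "(u', c') \<in> D" "c' \<in> V"
        unfolding isolated_by_def by blast
      moreover have "u' \<in> star_set C"
        using star_set_mono[of B C] B(1) that by blast
      ultimately have "u' = u"
        using isolated by blast
      then show False
        using that B(3) unfolding star_set_def by simp
    qed
    then show ?thesis
      using B by blast
  qed (use \<open>infinite A\<close> in blast)
qed

lemma discrete_subspace_isolated_by:
  assumes base: "\<And>W y. openin Y W \<Longrightarrow> y \<in> W \<Longrightarrow> \<exists>V\<in>\<B>. y \<in> V \<and> V \<subseteq> W"
    and "discrete_subspace (prod_topology omega_star Y) D" "(u, c) \<in> D"
  shows "\<exists>V\<in>\<B>. u \<in> isolated_by D V"
proof -
  have "openin (subtopology (prod_topology omega_star Y) D) {(u, c)}"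
    using assms(2,3) unfolding discrete_subspace_def by simp
  then obtain T where T: "openin (prod_topology omega_star Y) T" "{(u, c)} = T \<inter> D"
    unfolding openin_subtopology by blast
  moreover have "(u, c) \<in> T"
    using T(2) by blast
  ultimately obtain C V where "C \<in> u" "V \<in> \<B>" "c \<in> V" "star_set C \<times> V \<subseteq> T"
    using prod_omega_star_base[OF base] by meson
  moreover have "D \<inter> (star_set C \<times> V) \<subseteq> {(u, c)}"
    using T(2) calculation(4) by blast
  ultimately show ?thesis
    unfolding isolated_by_def using assms(3) by blast
qed

lemma dense_prod_omega_star_meets_star_set:
  assumes "prod_topology omega_star Y closure_of S = topspace (prod_topology omega_star Y)"
    and "infinite B" "topspace Y \<noteq> {}"
  shows "\<exists>u c. (u, c) \<in> S \<and> u \<in> star_set B"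
proof -
  obtain u0 y where "u0 \<in> star_set B" "y \<in> topspace Y"
    using star_set_nonempty[OF assms(2)] assms(3) by blast
  then have "(u0, y) \<in> prod_topology omega_star Y closure_of S"
    unfolding assms(1) topspace_prod_topology topspace_omega_star star_set_def by simp
  then have near: "\<forall>T. (u0, y) \<in> T \<and> openin (prod_topology omega_star Y) T \<longrightarrow>
      (\<exists>z. z \<in> S \<and> z \<in> T)"
    unfolding in_closure_of by (rule conjunct2)
  have "openin (prod_topology omega_star Y) (star_set B \<times> topspace Y)"
    by (simp add: openin_prod_Times_iff openin_star_set)
  then show ?thesis
    using near[rule_format, of "star_set B \<times> topspace Y"] \<open>u0 \<in> star_set B\<close> \<open>y \<in> topspace Y\<close>
    by auto
qed

theorem not_d_separable_prod_omega_star: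
  fixes Y :: "'b topology"
  assumes "second_countable Y" "topspace Y \<noteq> {}"
  shows "\<not> d_separable (prod_topology omega_star Y)"
proof
  assume "d_separable (prod_topology omega_star Y)"
  then obtain D :: "nat \<Rightarrow> (nat set set \<times> 'b) set"
    where discrete: "\<And>n. discrete_subspace (prod_topology omega_star Y) (D n)"
    and dense: "prod_topology omega_star Y closure_of (\<Union>n. D n) = topspace (prod_topology omega_star Y)"
    unfolding d_separable_def by blast
  obtain \<B> where "countable \<B>"
    and base: "\<And>W y. openin Y W \<Longrightarrow> y \<in> W \<Longrightarrow> \<exists>V\<in>\<B>. y \<in> V \<and> V \<subseteq> W"
    using assms(1) unfolding second_countable_def by metis
  have "countable ((UNIV :: nat set) \<times> \<B>)"
    using \<open>countable \<B>\<close> by simp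
  moreover have "nowhere_dense_star ((\<lambda>(n, V). isolated_by (D n) V) k)" for k
    by (simp add: nowhere_dense_star_isolated_by split_beta)
  ultimately obtain B where "infinite B"
    and B: "\<forall>k\<in>UNIV \<times> \<B>. star_set B \<inter> (\<lambda>(n, V). isolated_by (D n) V) k = {}"
    using nowhere_dense_star_countable_avoided by blast
  obtain n u c where "(u, c) \<in> D n" "u \<in> star_set B"
    using dense_prod_omega_star_meets_star_set[OF dense \<open>infinite B\<close> assms(2)] by blast
  moreover obtain V where "V \<in> \<B>" "u \<in> isolated_by (D n) V"
    using discrete_subspace_isolated_by[OF base discrete] calculation(1) by blast
  moreover have "star_set B \<inter> isolated_by (D n) V = {}"
    using B \<open>V \<in> \<B>\<close> by auto
  ultimately show False
    by blast
qed

theorem mainTheorem2: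
  shows "compact_space (prod_topology omega_star cantor_space) \<and>
         nwd_separable (prod_topology omega_star cantor_space) \<and>
         \<not> d_separable (prod_topology omega_star cantor_space)"
proof (intro conjI)
  show "compact_space (prod_topology omega_star cantor_space)"
    using compact_space_omega_star compact_space_cantor_space by (simp add: compact_space_prod_topology)
  show "nwd_separable (prod_topology omega_star cantor_space)"
    using second_countable_imp_separable_space[OF second_countable_cantor_space]
      nowhere_dense_cantor_singleton
    by (rule nwd_separable_prod_topology)
  show "\<not> d_separable (prod_topology omega_star cantor_space)"
    using second_countable_cantor_space by (rule not_d_separable_prod_omega_star) simp
qed

end
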